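(* Let $n\ge 2$ and let $\sigma$ be a uniformly random permutation of $E(G_n)$. Then the probability that there are distinct vertices $w_1,w_2\in W_B=E(G_n)$ with $N_{B(G_n,\sigma)}^{2}(w_1)=N_{B(G_n,\sigma)}^{2}(w_2)$ is in $\mathcal{O}\left(\frac{1}{n}\right)$ as $n\to\infty$.
   Context: $G_n$ is the graph with vertex set $\{1,\dots,2n\}$ and edge set $\{\{i,i+1\}: 1\le i\le 2n-1\}\cup\{\{2n,1\}\}\cup\{\{i,i+n\}: 1\le i\le n\}$. For a permutation $\sigma$ of $E(G_n)$, $B(G_n,\sigma)$ is the bipartite graph with parts $V_B=V(G_n)\times\{0,1\}$ and $W_B=E(G_n)$ and edge set $\{\{(v,0),e\}: v\in e\}\cup\{\{(v,1),e\}: v\in\sigma(e)\}$. For a graph $H$ and vertex $v$, the second neighbourhood is $N_H^{2}(v)=\{u\in V(H): u\neq v \text{ and there is } w \text{ with } \{v,w\},\{w,u\}\in E(H)\}$. *)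

theory Defs
  imports Complex_Main "HOL-Library.Landau_Symbols" "HOL-Combinatorics.Permutations"
begin

definition Gn_V :: "nat \<Rightarrow> nat set" where
  "Gn_V n = {1..2*n}"

definition Gn_E :: "nat \<Rightarrow> nat set set" where
  "Gn_E n = {{i, i+1} | i. 1 \<le> i \<and> i \<le> 2*n - 1} \<union> {{2*n, 1}}
            \<union> {{i, i+n} | i. 1 \<le> i \<and> i \<le> n}"

definition B_V :: "nat \<Rightarrow> ((nat \<times> nat) + nat set) set" where
  "B_V n = Inl ` (Gn_V n \<times> {0,1}) \<union> Inr ` Gn_E n"

definition B_E :: "nat \<Rightarrow> (nat set \<Rightarrow> nat set) \<Rightarrow> ((nat \<times> nat) + nat set) set set" where
  "B_E n \<sigma> = {{Inl (v,0), Inr e} | v e. e \<in> Gn_E n \<and> v \<in> e}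
            \<union> {{Inl (v,1), Inr e} | v e. e \<in> Gn_E n \<and> v \<in> \<sigma> e}"

definition second_nbhd :: "'a set set \<Rightarrow> 'a \<Rightarrow> 'a set" where
  "second_nbhd EH v = {u. u \<noteq> v \<and> (\<exists>w. {v,w} \<in> EH \<and> {w,u} \<in> EH)}"

definition has_twin_edges :: "nat \<Rightarrow> (nat set \<Rightarrow> nat set) \<Rightarrow> bool" where
  "has_twin_edges n \<sigma> \<longleftrightarrow> (\<exists>w1\<in>Gn_E n. \<exists>w2\<in>Gn_E n. w1 \<noteq> w2 \<and>
       second_nbhd (B_E n \<sigma>) (Inr w1) = second_nbhd (B_E n \<sigma>) (Inr w2))"

definition twin_prob :: "nat \<Rightarrow> real" where
  "twin_prob n = real (card {\<sigma>. \<sigma> permutes Gn_E n \<and> has_twin_edges n \<sigma>})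
                 / real (card {\<sigma>. \<sigma> permutes Gn_E n})"

end

theory Submission
  imports Defs
begin

text \<open>Twins \<open>e\<^sub>1 \<noteq> e\<^sub>2\<close> in \<open>W\<^sub>B\<close> are disjoint edges of \<open>G\<^sub>n\<close>, since intersecting edges lie in each
  other's second neighbourhood. As \<open>G\<^sub>n\<close> is cubic and triangle-free for \<open>n \<ge> 3\<close>, there are two edges
  \<open>f, g\<close> meeting \<open>e\<^sub>1\<close> but not \<open>e\<^sub>2\<close>, and an edge \<open>h\<close> meeting \<open>e\<^sub>2\<close> but not \<open>e\<^sub>1\<close>. Being twins
  forces \<open>\<sigma> f, \<sigma> g\<close> to meet \<open>\<sigma> e\<^sub>2\<close> and \<open>\<sigma> h\<close> to meet \<open>\<sigma> e\<^sub>1\<close>. So \<open>\<sigma>\<close> maps one of \<open>O(n\<^sup>2)\<close>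
  configurations of five distinct edges onto one of \<open>O(n\<^sup>2)\<close> configurations, and a prescribed image
  of five edges occurs with probability \<open>(m-5)!/m! = O(1/n\<^sup>5)\<close> where \<open>m = |E(G\<^sub>n)| \<ge> 2n - 1\<close>.\<close>

lemma card_permutes_map_eq_le:
  assumes "finite E" "distinct xs" "set xs \<subseteq> E"
  shows "card {\<sigma>. \<sigma> permutes E \<and> map \<sigma> xs = ys} \<le> fact (card E - length xs)"
  using assms
proof (induction xs arbitrary: E ys)
  case Nil
  have "card {\<sigma>. \<sigma> permutes E \<and> map \<sigma> [] = ys} \<le> card {\<sigma>. \<sigma> permutes E}"
    by (rule card_mono) (auto simp: finite_permutations Nil)
  then show ?case using card_permutations[OF refl Nil(1)] by simp
next
  case (Cons x xs)
  show ?case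
  proof (cases ys)
    case Nil
    then show ?thesis by simp
  next
    case ys: (Cons y ys')
    have xE: "x \<in> E" and E: "E = insert x (E - {x})" using Cons.prems by auto
    let ?S = "{p. p permutes (E - {x}) \<and> map p xs = map (transpose x y) ys'}"
    \<comment> \<open>Composing with the transposition of x and y reduces to permutations of E - {x}.\<close>
    have "{\<sigma>. \<sigma> permutes E \<and> map \<sigma> (x # xs) = ys} \<subseteq> (\<lambda>p. transpose x y \<circ> p) ` ?S"
    proof
      fix \<sigma> assume "\<sigma> \<in> {\<sigma>. \<sigma> permutes E \<and> map \<sigma> (x # xs) = ys}"
      then have \<sigma>: "\<sigma> permutes E" "\<sigma> x = y" "map \<sigma> xs = ys'" using ys by auto
      have "transpose x (\<sigma> x) \<circ> \<sigma> permutes (E - {x})"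
        by (rule permutes_insert_lemma) (use \<sigma>(1) E in simp)
      moreover have "map (transpose x y \<circ> \<sigma>) xs = map (transpose x y) ys'"
        using \<sigma>(3) by (metis map_map)
      moreover have "\<sigma> = transpose x y \<circ> (transpose x y \<circ> \<sigma>)" by (simp add: fun_eq_iff)
      ultimately show "\<sigma> \<in> (\<lambda>p. transpose x y \<circ> p) ` ?S" using \<sigma>(2) by auto
    qed
    then have "card {\<sigma>. \<sigma> permutes E \<and> map \<sigma> (x # xs) = ys} \<le> card ((\<lambda>p. transpose x y \<circ> p) ` ?S)"
      by (intro card_mono finite_imageI) (auto simp: finite_permutations Cons.prems)
    also have "\<dots> \<le> card ?S"
      by (rule card_image_le) (auto simp: finite_permutations Cons.prems)
    also have "\<dots> \<le> fact (card (E - {x}) - length xs)"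
      using Cons.IH[of "E - {x}"] Cons.prems by auto
    also have "\<dots> = fact (card E - length (x # xs))"
      using xE Cons.prems by (simp add: card_Diff_singleton)
    finally show ?thesis .
  qed
qed

lemma card_permutes_map_in_le:
  assumes "finite E" "finite D" "finite T"
    and "\<And>xs. xs \<in> D \<Longrightarrow> set xs \<subseteq> E \<and> length xs = k"
  shows "card {\<sigma>. \<sigma> permutes E \<and> (\<exists>xs\<in>D. distinct xs \<and> map \<sigma> xs \<in> T)}
           \<le> card D * card T * fact (card E - k)"
proof -
  let ?A = "\<lambda>xs ys. {\<sigma>. \<sigma> permutes E \<and> distinct xs \<and> map \<sigma> xs = ys}"
  have bound: "card (?A xs ys) \<le> fact (card E - k)" if "xs \<in> D" for xs ys
    using card_permutes_map_eq_le[OF assms(1), of xs ys] assms(4)[OF that] by (cases "distinct xs") auto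
  have "{\<sigma>. \<sigma> permutes E \<and> (\<exists>xs\<in>D. distinct xs \<and> map \<sigma> xs \<in> T)} = (\<Union>xs\<in>D. \<Union>ys\<in>T. ?A xs ys)"
    by blast
  then have "card {\<sigma>. \<sigma> permutes E \<and> (\<exists>xs\<in>D. distinct xs \<and> map \<sigma> xs \<in> T)}
      \<le> (\<Sum>xs\<in>D. card (\<Union>ys\<in>T. ?A xs ys))"
    by (simp add: card_UN_le[OF assms(2)])
  also have "\<dots> \<le> (\<Sum>xs\<in>D. \<Sum>ys\<in>T. card (?A xs ys))"
    by (intro sum_mono card_UN_le[OF assms(3)])
  also have "\<dots> \<le> (\<Sum>xs\<in>D. \<Sum>ys\<in>T. fact (card E - k))"
    by (intro sum_mono bound)
  finally show ?thesis by simp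
qed

lemma fact_mult_power_le: "fact k * (k + 1) ^ j \<le> (fact (k + j) :: nat)"
proof (induction j)
  case 0
  then show ?case by simp
next
  case (Suc j)
  have "fact k * (k + 1) ^ Suc j = (k + 1) * (fact k * (k + 1) ^ j)"
    by (simp add: algebra_simps)
  also have "\<dots> \<le> Suc (k + j) * fact (k + j)" using Suc.IH by (intro mult_le_mono) auto
  finally show ?case by simp
qed

definition Gn_adj :: "nat \<Rightarrow> nat \<Rightarrow> nat \<Rightarrow> bool" where
  "Gn_adj n x y \<longleftrightarrow> 1 \<le> x \<and> x \<le> 2*n \<and> 1 \<le> y \<and> y \<le> 2*n \<and>
     (y = x + 1 \<or> x = y + 1 \<or> (x = 2*n \<and> y = 1) \<or> (x = 1 \<and> y = 2*n) \<or> y = x + n \<or> x = y + n)"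

definition Gn_next :: "nat \<Rightarrow> nat \<Rightarrow> nat" where
  "Gn_next n x = (if x = 2*n then 1 else x + 1)"

definition Gn_prev :: "nat \<Rightarrow> nat \<Rightarrow> nat" where
  "Gn_prev n x = (if x = 1 then 2*n else x - 1)"

definition Gn_opp :: "nat \<Rightarrow> nat \<Rightarrow> nat" where
  "Gn_opp n x = (if x \<le> n then x + n else x - n)"

lemma Gn_adj_sym: "Gn_adj n x y \<Longrightarrow> Gn_adj n y x"
  unfolding Gn_adj_def by auto

lemma Gn_adj_iff:
  assumes "n \<ge> 3"
  shows "Gn_adj n x y \<longleftrightarrow> 1 \<le> x \<and> x \<le> 2*n \<and> (y = Gn_next n x \<or> y = Gn_prev n x \<or> y = Gn_opp n x)"
  using assms unfolding Gn_adj_def Gn_next_def Gn_prev_def Gn_opp_def by auto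

lemma Gn_nbrs_distinct:
  assumes "n \<ge> 3" "1 \<le> x" "x \<le> 2*n"
  shows "distinct [x, Gn_next n x, Gn_prev n x, Gn_opp n x]"
  using assms unfolding Gn_next_def Gn_prev_def Gn_opp_def by auto

lemma Gn_nbrs_not_adj:
  assumes "n \<ge> 3" "1 \<le> x" "x \<le> 2*n"
  shows "\<not> Gn_adj n (Gn_next n x) (Gn_prev n x)" "\<not> Gn_adj n (Gn_next n x) (Gn_opp n x)"
    "\<not> Gn_adj n (Gn_prev n x) (Gn_opp n x)"
  using assms unfolding Gn_adj_def Gn_next_def Gn_prev_def Gn_opp_def
  by (cases "x = 2*n"; cases "x = 1"; cases "x \<le> n"; simp; arith)+

lemma Gn_triangle_free:
  assumes "n \<ge> 3" "Gn_adj n x y" "Gn_adj n x z" "y \<noteq> z"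
  shows "\<not> Gn_adj n y z"
proof
  assume yz: "Gn_adj n y z"
  have x: "1 \<le> x" "x \<le> 2*n"
    and "y = Gn_next n x \<or> y = Gn_prev n x \<or> y = Gn_opp n x"
    and "z = Gn_next n x \<or> z = Gn_prev n x \<or> z = Gn_opp n x"
    using assms(2,3) unfolding Gn_adj_iff[OF assms(1)] by auto
  then show False
    using yz Gn_adj_sym[OF yz] assms(4) Gn_nbrs_not_adj[OF assms(1) x] by (elim disjE) simp_all
qed

lemma Gn_adj_other_nbrs:
  assumes "n \<ge> 3" "Gn_adj n x v"
  obtains u1 u2 where "Gn_adj n x u1" "Gn_adj n x u2" "distinct [x, v, u1, u2]"
proof -
  have x: "1 \<le> x" "x \<le> 2*n" and v: "v = Gn_next n x \<or> v = Gn_prev n x \<or> v = Gn_opp n x"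
    using assms unfolding Gn_adj_iff[OF assms(1)] by auto
  have nbrs: "Gn_adj n x (Gn_next n x)" "Gn_adj n x (Gn_prev n x)" "Gn_adj n x (Gn_opp n x)"
    using x unfolding Gn_adj_iff[OF assms(1)] by auto
  note distinct = Gn_nbrs_distinct[OF assms(1) x]
  from v show thesis
  proof (elim disjE)
    assume "v = Gn_next n x"
    then show thesis using distinct by (intro that[OF nbrs(2,3)]) simp
  next
    assume "v = Gn_prev n x"
    then show thesis using distinct by (intro that[OF nbrs(1,3)]) simp
  next
    assume "v = Gn_opp n x"
    then show thesis using distinct by (intro that[OF nbrs(1,2)]) simp
  qed
qed

lemma Gn_E_eq:
  "Gn_E n = (\<lambda>i. {i, i+1}) ` {1..2*n-1} \<union> {{2*n, 1}} \<union> (\<lambda>i. {i, i+n}) ` {1..n}"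
proof -
  have "\<And>k::nat. {i. 1 \<le> i \<and> i \<le> k} = {1..k}" by auto
  then show ?thesis unfolding Gn_E_def by (simp only: setcompr_eq_image)
qed

lemma finite_Gn_E: "finite (Gn_E n)"
  unfolding Gn_E_eq by simp

lemma Gn_E_iff:
  assumes "n \<ge> 1"
  shows "e \<in> Gn_E n \<longleftrightarrow> (\<exists>x y. e = {x, y} \<and> Gn_adj n x y)"
proof
  assume "e \<in> Gn_E n"
  then consider i where "e = {i, i+1}" "1 \<le> i" "i \<le> 2*n-1" | "e = {2*n, 1}"
    | i where "e = {i, i+n}" "1 \<le> i" "i \<le> n"
    unfolding Gn_E_eq by auto
  then show "\<exists>x y. e = {x, y} \<and> Gn_adj n x y"
  proof cases
    case (1 i)
    then have "Gn_adj n i (i+1)" using assms unfolding Gn_adj_def by linarith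
    then show ?thesis using 1 by blast
  next
    case 2
    have "Gn_adj n (2*n) 1" using assms unfolding Gn_adj_def by simp
    then show ?thesis using 2 by blast
  next
    case (3 i)
    then have "Gn_adj n i (i+n)" unfolding Gn_adj_def by simp
    then show ?thesis using 3 by blast
  qed
next
  assume "\<exists>x y. e = {x, y} \<and> Gn_adj n x y"
  then obtain x y where e: "e = {x, y}" "e = {y, x}" and xy: "Gn_adj n x y" by blast
  have "e \<in> (\<lambda>i. {i, i+1}) ` {1..2*n-1} \<or> e = {2*n, 1} \<or> e \<in> (\<lambda>i. {i, i+n}) ` {1..n}"
    using xy unfolding Gn_adj_def
  proof (elim conjE disjE)
    assume "y = x + 1" "1 \<le> x" "y \<le> 2*n"
    then show ?thesis using e(1) by auto
  next
    assume "x = y + 1" "1 \<le> y" "x \<le> 2*n"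
    then show ?thesis using e(2) by auto
  next
    assume "x = 2*n" "y = 1"
    then show ?thesis using e(1) by simp
  next
    assume "x = 1" "y = 2*n"
    then show ?thesis using e(2) by simp
  next
    assume "y = x + n" "1 \<le> x" "y \<le> 2*n"
    then show ?thesis using e(1) by auto
  next
    assume "x = y + n" "1 \<le> y" "x \<le> 2*n"
    then show ?thesis using e(2) by auto
  qed
  then show "e \<in> Gn_E n" unfolding Gn_E_eq by blast
qed

lemma card_Gn_E_le:
  assumes "n \<ge> 1"
  shows "card (Gn_E n) \<le> 3 * n"
proof -
  have "card (Gn_E n) \<le> card ((\<lambda>i. {i, i+1}) ` {1..2*n-1}) + card {{2*n, 1}}
      + card ((\<lambda>i. {i, i+n}) ` {1..n})"
    unfolding Gn_E_eq by (intro card_Un_le[THEN order.trans] add_mono card_Un_le order.refl)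
  also have "\<dots> \<le> card {1..2*n-1} + 1 + card {1..n}"
    by (intro add_mono card_image_le) auto
  finally show ?thesis using assms by simp
qed

lemma card_Gn_E_ge: "2 * n - 1 \<le> card (Gn_E n)"
proof -
  have "inj_on (\<lambda>i::nat. {i, i+1}) {1..2*n-1}"
    by (auto simp: inj_on_def doubleton_eq_iff)
  then have "2 * n - 1 = card ((\<lambda>i. {i, i+1}) ` {1..2*n-1})" by (simp add: card_image)
  also have "\<dots> \<le> card (Gn_E n)"
    by (rule card_mono[OF finite_Gn_E]) (unfold Gn_E_eq, blast)
  finally show ?thesis .
qed

definition meeting_edges :: "nat \<Rightarrow> nat set \<Rightarrow> nat set set" where
  "meeting_edges n e = {f \<in> Gn_E n. f \<inter> e \<noteq> {}}"

lemma meeting_edges_subset: "meeting_edges n e \<subseteq> Gn_E n"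
  unfolding meeting_edges_def by blast

lemma finite_meeting_edges: "finite (meeting_edges n e)"
  using finite_subset[OF meeting_edges_subset finite_Gn_E] .

lemma card_meeting_edges_le:
  assumes n: "n \<ge> 3" and e: "e \<in> Gn_E n"
  shows "card (meeting_edges n e) \<le> 6"
proof -
  have n1: "n \<ge> 1" using n by simp
  obtain x y where xy: "e = {x, y}" using e Gn_E_iff[OF n1] by blast
  let ?nbr_edges = "\<lambda>z. [{z, Gn_next n z}, {z, Gn_prev n z}, {z, Gn_opp n z}]"
  have "meeting_edges n e \<subseteq> set (?nbr_edges x @ ?nbr_edges y)"
  proof
    fix f assume "f \<in> meeting_edges n e"
    then have "f \<in> Gn_E n" "f \<inter> e \<noteq> {}" unfolding meeting_edges_def by auto
    then obtain a b where ab: "f = {a, b}" "Gn_adj n a b" "a \<in> e \<or> b \<in> e"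
      unfolding Gn_E_iff[OF n1] by blast
    have "\<exists>z w. f = {z, w} \<and> Gn_adj n z w \<and> z \<in> e"
    proof (cases "a \<in> e")
      case True
      then show ?thesis using ab by blast
    next
      case False
      then show ?thesis using ab Gn_adj_sym[OF ab(2)] insert_commute by blast
    qed
    then obtain z w where f: "f = {z, w}" and "Gn_adj n z w" and z: "z = x \<or> z = y"
      using xy by blast
    then have "f \<in> set (?nbr_edges z)"
      unfolding Gn_adj_iff[OF n] by (elim conjE disjE) simp_all
    then show "f \<in> set (?nbr_edges x @ ?nbr_edges y)" using z by auto
  qed
  then have "card (meeting_edges n e) \<le> card (set (?nbr_edges x @ ?nbr_edges y))"
    by (intro card_mono) simp_all
  also have "\<dots> \<le> 6" by (rule card_length[THEN order.trans]) simp
  finally show ?thesis .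
qed

lemma two_doubletons_avoiding:
  assumes "distinct [u, v, u1, u2, v1, v2]" "c \<notin> {u, v}" "d \<notin> {u, v}"
  shows "\<exists>f\<in>{{u, u1}, {u, u2}, {v, v1}, {v, v2}}. \<exists>g\<in>{{u, u1}, {u, u2}, {v, v1}, {v, v2}}.
           f \<noteq> g \<and> f \<inter> {c, d} = {} \<and> g \<inter> {c, d} = {}"
  using assms by (simp add: doubleton_eq_iff) metis

lemma Gn_meeting_edges_avoiding:
  assumes n: "n \<ge> 3" and e1: "e1 \<in> Gn_E n" and e2: "e2 \<in> Gn_E n" and disj: "e1 \<inter> e2 = {}"
  obtains f g where "f \<in> meeting_edges n e1" "g \<in> meeting_edges n e1" "distinct [e1, f, g]"
    "f \<inter> e2 = {}" "g \<inter> e2 = {}"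
proof -
  have n1: "n \<ge> 1" using n by simp
  obtain u v where e1_uv: "e1 = {u, v}" and uv: "Gn_adj n u v" using e1 Gn_E_iff[OF n1] by blast
  obtain c d where e2_cd: "e2 = {c, d}" using e2 Gn_E_iff[OF n1] by blast
  obtain u1 u2 where u: "Gn_adj n u u1" "Gn_adj n u u2" "distinct [u, v, u1, u2]"
    using Gn_adj_other_nbrs[OF n uv] by blast
  obtain v1 v2 where v: "Gn_adj n v v1" "Gn_adj n v v2" "distinct [v, u, v1, v2]"
    using Gn_adj_other_nbrs[OF n Gn_adj_sym[OF uv]] by blast
  have no_common_nbr: "ui \<noteq> vj" if "Gn_adj n u ui" "ui \<noteq> v" "Gn_adj n v vj" for ui vj
    using Gn_triangle_free[OF n that(1) uv that(2)] that(3) Gn_adj_sym by blast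
  have "u1 \<noteq> v1" "u1 \<noteq> v2" "u2 \<noteq> v1" "u2 \<noteq> v2"
    using u(3) by (simp_all add: no_common_nbr u(1,2) v(1,2))
  then have "distinct [u, v, u1, u2, v1, v2]" using u(3) v(3) by simp
  moreover have "c \<notin> {u, v}" "d \<notin> {u, v}" using disj e1_uv e2_cd by auto
  ultimately obtain f g where fg: "f \<in> {{u, u1}, {u, u2}, {v, v1}, {v, v2}}"
      "g \<in> {{u, u1}, {u, u2}, {v, v1}, {v, v2}}" "f \<noteq> g" "f \<inter> {c, d} = {}" "g \<inter> {c, d} = {}"
    by (metis two_doubletons_avoiding)
  have "{u, u1} \<in> Gn_E n" "{u, u2} \<in> Gn_E n" "{v, v1} \<in> Gn_E n" "{v, v2} \<in> Gn_E n"
    using u(1,2) v(1,2) unfolding Gn_E_iff[OF n1] by blast+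
  moreover have "{u, u1} \<noteq> e1" "{u, u2} \<noteq> e1" "{v, v1} \<noteq> e1" "{v, v2} \<noteq> e1"
    using u(3) v(3) unfolding e1_uv by (auto simp: doubleton_eq_iff)
  ultimately have "h \<in> meeting_edges n e1 \<and> h \<noteq> e1"
    if "h \<in> {{u, u1}, {u, u2}, {v, v1}, {v, v2}}" for h
    using that unfolding meeting_edges_def e1_uv by blast
  then show thesis
    using fg that unfolding e2_cd by (metis distinct_length_2_or_more distinct_singleton)
qed

lemma Inr_mem_second_nbhd_B_E_iff:
  "Inr f \<in> second_nbhd (B_E n \<sigma>) (Inr e) \<longleftrightarrow>
     e \<in> Gn_E n \<and> f \<in> Gn_E n \<and> f \<noteq> e \<and> (e \<inter> f \<noteq> {} \<or> \<sigma> e \<inter> \<sigma> f \<noteq> {})"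
  unfolding second_nbhd_def B_E_def by (auto simp: doubleton_eq_iff)

lemma twin_edges_disjoint:
  assumes "second_nbhd (B_E n \<sigma>) (Inr e1) = second_nbhd (B_E n \<sigma>) (Inr e2)"
    and "e1 \<in> Gn_E n" "e2 \<in> Gn_E n" "e1 \<noteq> e2"
  shows "e1 \<inter> e2 = {}"
  using assms Inr_mem_second_nbhd_B_E_iff[of e2 n \<sigma> e1] Inr_mem_second_nbhd_B_E_iff[of e2 n \<sigma> e2]
  by auto

lemma twin_edges_permuted_meet:
  assumes twins: "second_nbhd (B_E n \<sigma>) (Inr e1) = second_nbhd (B_E n \<sigma>) (Inr e2)"
    and "e1 \<in> Gn_E n" "e2 \<in> Gn_E n" and \<sigma>: "\<sigma> permutes Gn_E n"
    and f: "f \<in> meeting_edges n e1" "f \<noteq> e1" "f \<inter> e2 = {}"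
  shows "\<sigma> f \<in> meeting_edges n (\<sigma> e2)"
proof -
  have "f \<in> Gn_E n" "e1 \<inter> f \<noteq> {}" using f unfolding meeting_edges_def by auto
  then have "Inr f \<in> second_nbhd (B_E n \<sigma>) (Inr e2)"
    using twins assms(2) f(2) Inr_mem_second_nbhd_B_E_iff by metis
  then have "\<sigma> e2 \<inter> \<sigma> f \<noteq> {}" using f(3) Inr_mem_second_nbhd_B_E_iff by blast
  then show ?thesis
    using permutes_in_image[OF \<sigma>] \<open>f \<in> Gn_E n\<close> unfolding meeting_edges_def by blast
qed

definition twin_configs :: "nat \<Rightarrow> (nat set \<times> nat set \<times> nat set \<times> nat set \<times> nat set) set" where
  "twin_configs n = (SIGMA e1:Gn_E n. SIGMA e2:Gn_E n.
     meeting_edges n e1 \<times> meeting_edges n e1 \<times> meeting_edges n e2)"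

lemma card_twin_configs_le:
  assumes "n \<ge> 3"
  shows "card (twin_configs n) \<le> card (Gn_E n) ^ 2 * 6 ^ 3"
proof -
  have "card (twin_configs n) = (\<Sum>e1\<in>Gn_E n. \<Sum>e2\<in>Gn_E n.
      card (meeting_edges n e1) * card (meeting_edges n e1) * card (meeting_edges n e2))"
    unfolding twin_configs_def
    by (simp add: card_SigmaI finite_Gn_E finite_meeting_edges card_cartesian_product mult.assoc)
  also have "\<dots> \<le> (\<Sum>e1\<in>Gn_E n. \<Sum>e2\<in>Gn_E n. 6 * 6 * 6)"
    using card_meeting_edges_le[OF assms] by (intro sum_mono mult_le_mono) auto
  finally show ?thesis by (simp add: power2_eq_square)
qed

lemma has_twin_edges_config:
  assumes n: "n \<ge> 3" and \<sigma>: "\<sigma> permutes Gn_E n" and "has_twin_edges n \<sigma>"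
  shows "\<exists>(e1, e2, f, g, h)\<in>twin_configs n. distinct [e1, e2, f, g, h] \<and>
           (\<sigma> e2, \<sigma> e1, \<sigma> f, \<sigma> g, \<sigma> h) \<in> twin_configs n"
proof -
  obtain e1 e2 where e: "e1 \<in> Gn_E n" "e2 \<in> Gn_E n" "e1 \<noteq> e2"
    and twins: "second_nbhd (B_E n \<sigma>) (Inr e1) = second_nbhd (B_E n \<sigma>) (Inr e2)"
    using assms(3) unfolding has_twin_edges_def by blast
  have disj: "e1 \<inter> e2 = {}" by (rule twin_edges_disjoint[OF twins e])
  obtain f g where fg: "f \<in> meeting_edges n e1" "g \<in> meeting_edges n e1" "distinct [e1, f, g]"
    "f \<inter> e2 = {}" "g \<inter> e2 = {}"
    using Gn_meeting_edges_avoiding[OF n e(1,2) disj] .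
  have "e2 \<inter> e1 = {}" using disj by blast
  then obtain h h' where h: "h \<in> meeting_edges n e2" "h' \<in> meeting_edges n e2" "distinct [e2, h, h']"
    "h \<inter> e1 = {}" "h' \<inter> e1 = {}"
    by (rule Gn_meeting_edges_avoiding[OF n e(2,1)])
  have "f \<inter> e1 \<noteq> {}" "g \<inter> e1 \<noteq> {}" "h \<inter> e2 \<noteq> {}"
    using fg(1,2) h(1) unfolding meeting_edges_def by auto
  then have "f \<noteq> e2" "g \<noteq> e2" "h \<noteq> e1" "h \<noteq> f" "h \<noteq> g"
    using disj h(4) by auto
  then have "distinct [e1, e2, f, g, h]"
    using e(3) fg(3) h(3) by auto
  moreover have "(e1, e2, f, g, h) \<in> twin_configs n"
    using e fg(1,2) h(1) unfolding twin_configs_def by simp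
  moreover have "(\<sigma> e2, \<sigma> e1, \<sigma> f, \<sigma> g, \<sigma> h) \<in> twin_configs n"
    using twin_edges_permuted_meet[OF twins e(1,2) \<sigma>] fg
      twin_edges_permuted_meet[OF twins[symmetric] e(2,1) \<sigma>] h e permutes_in_image[OF \<sigma>]
    unfolding twin_configs_def by auto
  ultimately show ?thesis by blast
qed

lemma card_twin_permutations_le:
  assumes "n \<ge> 3"
  shows "card {\<sigma>. \<sigma> permutes Gn_E n \<and> has_twin_edges n \<sigma>}
           \<le> card (twin_configs n) ^ 2 * fact (card (Gn_E n) - 5)"
proof -
  let ?D = "(\<lambda>(e1, e2, f, g, h). [e1, e2, f, g, h]) ` twin_configs n"
  let ?T = "(\<lambda>(e1, e2, f, g, h). [e2, e1, f, g, h]) ` twin_configs n"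
  have fin: "finite (twin_configs n)"
    unfolding twin_configs_def by (simp add: finite_Gn_E finite_meeting_edges)
  have "{\<sigma>. \<sigma> permutes Gn_E n \<and> has_twin_edges n \<sigma>}
      \<subseteq> {\<sigma>. \<sigma> permutes Gn_E n \<and> (\<exists>xs\<in>?D. distinct xs \<and> map \<sigma> xs \<in> ?T)}"
  proof safe
    fix \<sigma> assume "\<sigma> permutes Gn_E n" "has_twin_edges n \<sigma>"
    then obtain e1 e2 f g h where c: "(e1, e2, f, g, h) \<in> twin_configs n" "distinct [e1, e2, f, g, h]"
      "(\<sigma> e2, \<sigma> e1, \<sigma> f, \<sigma> g, \<sigma> h) \<in> twin_configs n"
      using has_twin_edges_config[OF assms] by fast
    have "[e1, e2, f, g, h] \<in> ?D" using c(1) by (rule rev_image_eqI) simp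
    moreover have "map \<sigma> [e1, e2, f, g, h] \<in> ?T" using c(3) by (rule rev_image_eqI) simp
    ultimately show "\<exists>xs\<in>?D. distinct xs \<and> map \<sigma> xs \<in> ?T" using c(2) by blast
  qed
  then have "card {\<sigma>. \<sigma> permutes Gn_E n \<and> has_twin_edges n \<sigma>}
      \<le> card {\<sigma>. \<sigma> permutes Gn_E n \<and> (\<exists>xs\<in>?D. distinct xs \<and> map \<sigma> xs \<in> ?T)}"
    by (intro card_mono) (simp_all add: finite_permutations finite_Gn_E)
  also have "\<dots> \<le> card ?D * card ?T * fact (card (Gn_E n) - 5)"
    using fin by (intro card_permutes_map_in_le finite_Gn_E finite_imageI)
      (auto simp: twin_configs_def dest: meeting_edges_subset[THEN subsetD])
  also have "\<dots> \<le> card (twin_configs n) ^ 2 * fact (card (Gn_E n) - 5)"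
    using card_image_le[OF fin, of "\<lambda>(e1, e2, f, g, h). [e1, e2, f, g, h]"]
      card_image_le[OF fin, of "\<lambda>(e1, e2, f, g, h). [e2, e1, f, g, h]"]
    by (simp add: power2_eq_square mult_le_mono)
  finally show ?thesis .
qed

lemma twin_prob_le:
  assumes n: "n \<ge> 5"
  shows "twin_prob n \<le> 1944 ^ 2 / real n"
proof -
  let ?m = "card (Gn_E n)"
  let ?twins = "card {\<sigma>. \<sigma> permutes Gn_E n \<and> has_twin_edges n \<sigma>}"
  have m: "n \<le> ?m - 5 + 1" "?m \<le> 3 * n" using card_Gn_E_ge[of n] card_Gn_E_le[of n] n by auto
  have configs: "card (twin_configs n) \<le> 1944 * n ^ 2"
  proof -
    have "card (twin_configs n) \<le> ?m ^ 2 * 6 ^ 3" using card_twin_configs_le n by simp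
    also have "\<dots> \<le> (3 * n) ^ 2 * 6 ^ 3" using m(2) by (intro mult_le_mono power_mono) auto
    finally show ?thesis by (simp add: power_mult_distrib)
  qed
  have "?twins \<le> card (twin_configs n) ^ 2 * fact (?m - 5)"
    using card_twin_permutations_le n by simp
  also have "\<dots> \<le> (1944 * n ^ 2) ^ 2 * fact (?m - 5)"
    using configs by (intro mult_le_mono1 power_mono) auto
  finally have "?twins \<le> (1944 * n ^ 2) ^ 2 * fact (?m - 5)" .
  then have "?twins * n \<le> (1944 * n ^ 2) ^ 2 * fact (?m - 5) * n" by simp
  also have "\<dots> = 1944 ^ 2 * (fact (?m - 5) * n ^ 5)"
    by (simp add: power_mult_distrib flip: power_mult power_Suc2)
  also have "\<dots> \<le> 1944 ^ 2 * fact (?m - 5 + 5)"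
    using fact_mult_power_le[of "?m - 5" 5] m(1)
    by (meson dual_order.trans mult_le_mono order.refl power_mono zero_le)
  also have "?m - 5 + 5 = ?m" using card_Gn_E_ge[of n] n by simp
  finally have "?twins * n \<le> 1944 ^ 2 * fact ?m" .
  then have "real ?twins * real n \<le> 1944 ^ 2 * fact ?m"
    using of_nat_mono[where 'a = real] by fastforce
  then have "real ?twins / fact ?m \<le> 1944 ^ 2 / real n"
    using n by (simp add: divide_simps mult.commute)
  then show ?thesis
    unfolding twin_prob_def card_permutations[OF refl finite_Gn_E] by simp
qed

theorem mainTheorem10:
  shows "twin_prob \<in> O(\<lambda>n. 1 / real n)"
proof (rule bigoI[where c = "1944 ^ 2"])
  show "\<forall>\<^sub>F n in at_top. norm (twin_prob n) \<le> 1944 ^ 2 * norm (1 / real n)"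
  proof (rule eventually_at_top_linorderI[where c = 5])
    fix n :: nat assume "n \<ge> 5"
    moreover have "twin_prob n \<ge> 0" unfolding twin_prob_def by simp
    ultimately show "norm (twin_prob n) \<le> 1944 ^ 2 * norm (1 / real n)"
      using twin_prob_le[of n] by simp
  qed
qed

end
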